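(* Let $k$ be a field of characteristic zero, $n\ge1$, $S=k[x_1,\ldots,x_n]$, and $(S,L)$ a Lie–Rinehart algebra with $L$ a free $S$-module with basis $\alpha_1,\ldots,\alpha_n$ and enveloping algebra $U$. Let $p\ge1$ and $a=\sum_{|I|=p}f^I\alpha^I$ with $f^I\in S$ for $I\in\mathbb{N}^n$, $|I|=p$. If $k'\in\{1,\ldots,n\}$ and $J=(j_n,\ldots,j_1)\in\mathbb{N}^n$ has order $p-1$, then the coefficient of $\alpha^J$ in $[a,x_{k'}]$ (with respect to the left $S$-basis $\{\alpha^I\}$ of $U$) is $$\sum_{m=1}^n(j_m+1)\,\alpha_m(x_{k'})\,f^{J+e_m}.$$
   Context: $\alpha_m(x_{k'})$ denotes the action of $\alpha_m$ (through the anchor $L\to\operatorname{Der}(S)$) on $x_{k'}$; in $U$, $[\alpha,s]=\alpha(s)$. For $I=(i_n,\ldots,i_1)\in\mathbb{N}^n$, $\alpha^I=\alpha_n^{i_n}\cdots\alpha_1^{i_1}$ and $|I|=i_n+\cdots+i_1$ (its order); the $\alpha^I$ form a basis of $U$ as a left $S$-module. $e_m\in\mathbb{N}^n$ is the tuple with $1$ in the entry indexed by $m$ (the exponent of $\alpha_m$) and $0$ elsewhere. *)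

theory Defs
  imports "HOL-Library.Poly_Mapping"
begin

(* Polynomials: k[x_1,x_2,...] as finitely supported maps from monomials
   (exponent vectors nat =>0 nat) to coefficients; S = k[x_1..x_n] is the
   subset polys_in n of polynomials involving only x_1..x_n. *)
type_synonym 'k mpoly = "(nat \<Rightarrow>\<^sub>0 nat) \<Rightarrow>\<^sub>0 'k"

definition Var :: "nat \<Rightarrow> 'k::{zero,one} mpoly" where
  "Var i = Poly_Mapping.single (Poly_Mapping.single i 1) 1"

definition Const :: "'k::zero \<Rightarrow> 'k mpoly" where
  "Const c = Poly_Mapping.single 0 c"

definition polys_in :: "nat \<Rightarrow> 'k::zero mpoly set" where
  "polys_in n = {p. \<forall>mon \<in> Poly_Mapping.keys p. Poly_Mapping.keys mon \<subseteq> {1..n}}"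

definition is_kderiv :: "nat \<Rightarrow> ('k::field mpoly \<Rightarrow> 'k mpoly) \<Rightarrow> bool" where
  "is_kderiv n D \<longleftrightarrow>
     (\<forall>p \<in> polys_in n. D p \<in> polys_in n) \<and>
     (\<forall>p \<in> polys_in n. \<forall>q \<in> polys_in n. D (p + q) = D p + D q) \<and>
     (\<forall>c. \<forall>p \<in> polys_in n. D (Const c * p) = Const c * D p) \<and>
     (\<forall>p \<in> polys_in n. \<forall>q \<in> polys_in n. D (p * q) = p * D q + q * D p)"

(* multi-indices I = (i_n,...,i_1) in N^n, as functions vanishing outside {1..n} *)
definition idx :: "nat \<Rightarrow> (nat \<Rightarrow> nat) set" where
  "idx n = {I. \<forall>m. m \<notin> {1..n} \<longrightarrow> I m = 0}"

definition ord_idx :: "nat \<Rightarrow> (nat \<Rightarrow> nat) \<Rightarrow> nat" where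
  "ord_idx n I = (\<Sum>m = 1..n. I m)"

definition alpha_pow :: "nat \<Rightarrow> (nat \<Rightarrow> 'u::monoid_mult) \<Rightarrow> (nat \<Rightarrow> nat) \<Rightarrow> 'u" where
  "alpha_pow n \<alpha> I = prod_list (map (\<lambda>m. \<alpha> m ^ I m) (rev [1..<Suc n]))"

definition basis_rep ::
  "nat \<Rightarrow> ('k::field mpoly \<Rightarrow> 'u::ring_1) \<Rightarrow> (nat \<Rightarrow> 'u) \<Rightarrow> 'u \<Rightarrow> ((nat \<Rightarrow> nat) \<Rightarrow> 'k mpoly) \<Rightarrow> bool" where
  "basis_rep n \<iota> \<alpha> u f \<longleftrightarrow>
     (\<forall>I. f I \<in> polys_in n) \<and> (\<forall>I. I \<notin> idx n \<longrightarrow> f I = 0) \<and>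
     finite {I. f I \<noteq> 0} \<and>
     u = (\<Sum>I \<in> {I. f I \<noteq> 0}. \<iota> (f I) * alpha_pow n \<alpha> I)"

definition ucoeff ::
  "nat \<Rightarrow> ('k::field mpoly \<Rightarrow> 'u::ring_1) \<Rightarrow> (nat \<Rightarrow> 'u) \<Rightarrow> 'u \<Rightarrow> (nat \<Rightarrow> nat) \<Rightarrow> 'k mpoly" where
  "ucoeff n \<iota> \<alpha> u J = (THE f. basis_rep n \<iota> \<alpha> u f) J"

(* Data of a Lie-Rinehart algebra (S,L), S = k[x_1..x_n], L free over S with
   basis alpha_1..alpha_n, anchor alpha_m |-> delta m, structure constants
   [alpha_i,alpha_j] = sum_m c i j m alpha_m, together with its enveloping
   algebra U: iota : S -> U a ring map, alpha_m in U, the defining relations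
   of U, and the PBW property that {alpha^I} is a left S-basis of U. *)
definition LR_envelope ::
  "nat \<Rightarrow> ('k::field mpoly \<Rightarrow> 'u::ring_1) \<Rightarrow> (nat \<Rightarrow> 'u)
   \<Rightarrow> (nat \<Rightarrow> 'k mpoly \<Rightarrow> 'k mpoly) \<Rightarrow> (nat \<Rightarrow> nat \<Rightarrow> nat \<Rightarrow> 'k mpoly) \<Rightarrow> bool" where
  "LR_envelope n \<iota> \<alpha> \<delta> c \<longleftrightarrow>
     \<comment> \<open>iota is a ring homomorphism S -> U\<close>
     \<iota> 1 = 1 \<and>
     (\<forall>p \<in> polys_in n. \<forall>q \<in> polys_in n. \<iota> (p + q) = \<iota> p + \<iota> q) \<and>
     (\<forall>p \<in> polys_in n. \<forall>q \<in> polys_in n. \<iota> (p * q) = \<iota> p * \<iota> q) \<and>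
     \<comment> \<open>anchor: each alpha_m acts on S by a k-derivation\<close>
     (\<forall>m \<in> {1..n}. is_kderiv n (\<delta> m)) \<and>
     \<comment> \<open>Lie bracket of L on the basis, antisymmetric, anchor is a Lie map\<close>
     (\<forall>i j m. c i j m \<in> polys_in n) \<and>
     (\<forall>i \<in> {1..n}. \<forall>j \<in> {1..n}. \<forall>m. c i j m = - c j i m) \<and>
     (\<forall>i \<in> {1..n}. \<forall>j \<in> {1..n}. \<forall>s \<in> polys_in n.
        \<delta> i (\<delta> j s) - \<delta> j (\<delta> i s) = (\<Sum>m = 1..n. c i j m * \<delta> m s)) \<and>
     \<comment> \<open>relations in U\<close>
     (\<forall>m \<in> {1..n}. \<forall>s \<in> polys_in n. \<alpha> m * \<iota> s - \<iota> s * \<alpha> m = \<iota> (\<delta> m s)) \<and>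
     (\<forall>i \<in> {1..n}. \<forall>j \<in> {1..n}.
        \<alpha> i * \<alpha> j - \<alpha> j * \<alpha> i = (\<Sum>m = 1..n. \<iota> (c i j m) * \<alpha> m)) \<and>
     \<comment> \<open>PBW: {alpha^I} is a left S-basis of U\<close>
     (\<forall>u. \<exists>!f. basis_rep n \<iota> \<alpha> u f)"

end

theory Submission
  imports Defs
begin

text \<open>
  Filter \<open>U\<close> by the order of the monomials \<open>\<alpha>^I\<close> of the left \<open>S\<close>-basis. Commuting
  \<open>\<alpha>\<^sub>m\<close> with \<open>\<alpha>\<^sub>j\<close> only produces elements of \<open>L\<close>, so
  \<open>\<alpha>\<^sub>m \<alpha>^K \<equiv> \<alpha>^(K + e\<^sub>m)\<close> modulo order \<open>\<le> |K|\<close>, and left multiplication by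
  \<open>\<alpha>\<^sub>m\<close> raises the order by at most one. Peeling off the leftmost factor of \<open>\<alpha>^I\<close>
  and using \<open>[\<alpha>\<^sub>j, s] = \<alpha>\<^sub>j(s)\<close>, induction on \<open>|I|\<close> gives
  \<open>[\<alpha>^I, s] \<equiv> \<Sum>\<^sub>m i\<^sub>m \<alpha>\<^sub>m(s) \<alpha>^(I - e\<^sub>m)\<close> modulo order \<open>< |I| - 1\<close>.
  In the coefficient of \<open>\<alpha>^J\<close> with \<open>|J| = p - 1\<close> only the terms with \<open>I = J + e\<^sub>m\<close>
  survive, each with multiplicity \<open>i\<^sub>m = j\<^sub>m + 1\<close>.
\<close>

lemma polys_in_zero [simp]: "0 \<in> polys_in n"
  by (simp add: polys_in_def)

lemma polys_in_one [simp]: "(1 :: 'k::comm_ring_1 mpoly) \<in> polys_in n"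
  by (simp add: polys_in_def)

lemma polys_in_add [intro]:
  fixes p q :: "'k::comm_ring_1 mpoly"
  shows "p \<in> polys_in n \<Longrightarrow> q \<in> polys_in n \<Longrightarrow> p + q \<in> polys_in n"
  using keys_add[of p q] unfolding polys_in_def by blast

lemma polys_in_mult [intro]:
  fixes p q :: "'k::comm_ring_1 mpoly"
  assumes p: "p \<in> polys_in n" and q: "q \<in> polys_in n"
  shows "p * q \<in> polys_in n"
  unfolding polys_in_def
proof safe
  fix mon x
  assume "mon \<in> Poly_Mapping.keys (p * q)" and x: "x \<in> Poly_Mapping.keys mon"
  then obtain a b where "mon = a + b" "a \<in> Poly_Mapping.keys p" "b \<in> Poly_Mapping.keys q"
    using keys_mult by blast
  then show "x \<in> {1..n}"
    using keys_add[of a b] p q x unfolding polys_in_def by blast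
qed

lemma polys_in_of_nat [intro]: "(of_nat k :: 'k::comm_ring_1 mpoly) \<in> polys_in n"
  by (induction k) auto

lemma polys_in_Var: "k \<in> {1..n} \<Longrightarrow> (Var k :: 'k::comm_ring_1 mpoly) \<in> polys_in n"
  by (simp add: polys_in_def Var_def)

lemma alpha_pow_0 [simp]: "alpha_pow 0 \<alpha> K = 1"
  by (simp add: alpha_pow_def)

lemma alpha_pow_Suc: "alpha_pow (Suc i) \<alpha> K = \<alpha> (Suc i) ^ K (Suc i) * alpha_pow i \<alpha> K"
  by (simp add: alpha_pow_def)

lemma alpha_pow_cong:
  "(\<And>l. 1 \<le> l \<Longrightarrow> l \<le> i \<Longrightarrow> K l = K' l) \<Longrightarrow> alpha_pow i \<alpha> K = alpha_pow i \<alpha> K'"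
  by (induction i) (auto simp: alpha_pow_Suc)

lemma alpha_pow_eq_1: "(\<And>l. 1 \<le> l \<Longrightarrow> l \<le> i \<Longrightarrow> K l = 0) \<Longrightarrow> alpha_pow i \<alpha> K = 1"
  by (induction i) (auto simp: alpha_pow_Suc)

lemma alpha_pow_incr_leading:
  assumes "1 \<le> m" "m \<le> i" "\<And>l. m < l \<Longrightarrow> K l = 0"
  shows "alpha_pow i \<alpha> (K(m := K m + 1)) = \<alpha> m * alpha_pow i \<alpha> K"
  using assms
proof (induction i)
  case (Suc i)
  show ?case
  proof (cases "m = Suc i")
    case True
    have "alpha_pow i \<alpha> (K(m := K m + 1)) = alpha_pow i \<alpha> K"
      by (rule alpha_pow_cong) (use True in auto)
    then show ?thesis
      using True by (simp add: alpha_pow_Suc mult.assoc fun_upd_def)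
  next
    case False
    then show ?thesis
      using Suc by (simp add: alpha_pow_Suc)
  qed
qed simp

lemma idx_upd: "K \<in> idx n \<Longrightarrow> m \<in> {1..n} \<Longrightarrow> K(m := x) \<in> idx n"
  by (auto simp: idx_def)

lemma ord_idx_incr:
  assumes "m \<in> {1..n}"
  shows "ord_idx n (K(m := K m + 1)) = ord_idx n K + 1"
proof -
  have "ord_idx n (K(m := K m + 1)) = (\<Sum>l = 1..n. K l + (if l = m then 1 else 0))"
    unfolding ord_idx_def by (rule sum.cong) auto
  then show ?thesis
    using assms by (simp add: sum.distrib ord_idx_def)
qed

lemma ord_idx_decr: "m \<in> {1..n} \<Longrightarrow> 0 < K m \<Longrightarrow> ord_idx n (K(m := K m - 1)) + 1 = ord_idx n K"
  using ord_idx_incr[of m n "K(m := K m - 1)"] by simp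

lemma ord_idx_eq_0D: "K \<in> idx n \<Longrightarrow> ord_idx n K = 0 \<Longrightarrow> K l = 0"
  by (cases "l \<in> {1..n}") (auto simp: idx_def ord_idx_def)

lemma idx_leading_index:
  assumes "K \<in> idx n" "0 < K l"
  obtains j where "j \<in> {1..n}" "l \<le> j" "0 < K j" "\<And>i. j < i \<Longrightarrow> K i = 0"
proof -
  let ?supp = "{i \<in> {1..n}. 0 < K i}"
  have l: "l \<in> ?supp"
    using assms by (auto simp: idx_def)
  have fin: "finite ?supp"
    by simp
  have "Max ?supp \<in> ?supp"
    using Max_in[OF fin] l by blast
  moreover have "l \<le> Max ?supp"
    using Max_ge[OF fin l] .
  moreover have "K i = 0" if "Max ?supp < i" for i
  proof (cases "i \<in> ?supp")
    case True
    then show ?thesis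
      using Max_ge[OF fin True] that by simp
  next
    case False
    then show ?thesis
      using assms(1) by (auto simp: idx_def)
  qed
  ultimately show thesis
    using that by blast
qed

lemma finite_idx_ord: "finite {I \<in> idx n. ord_idx n I = p}"
proof (rule finite_subset)
  show "{I \<in> idx n. ord_idx n I = p}
      \<subseteq> {I. \<forall>x. (x \<in> {1..n} \<longrightarrow> I x \<in> {0..p}) \<and> (x \<notin> {1..n} \<longrightarrow> I x = 0)}"
    by (auto simp: idx_def ord_idx_def member_le_sum)
  show "finite {I. \<forall>x. (x \<in> {1..n} \<longrightarrow> I x \<in> {0..p}) \<and> (x \<notin> {1..n} \<longrightarrow> I x = (0::nat))}"
    by (rule finite_set_of_finite_funs) auto
qed

locale LR_env =
  fixes n :: nat and \<iota> :: "'k::field mpoly \<Rightarrow> 'u::ring_1" and \<alpha> :: "nat \<Rightarrow> 'u"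
    and \<delta> :: "nat \<Rightarrow> 'k mpoly \<Rightarrow> 'k mpoly" and c :: "nat \<Rightarrow> nat \<Rightarrow> nat \<Rightarrow> 'k mpoly"
  assumes envelope: "LR_envelope n \<iota> \<alpha> \<delta> c"
begin

abbreviation S :: "'k mpoly set" where "S \<equiv> polys_in n"
abbreviation apow :: "(nat \<Rightarrow> nat) \<Rightarrow> 'u" where "apow \<equiv> alpha_pow n \<alpha>"
abbreviation coeff :: "'u \<Rightarrow> (nat \<Rightarrow> nat) \<Rightarrow> 'k mpoly" where "coeff \<equiv> ucoeff n \<iota> \<alpha>"

lemma iota_one: "\<iota> 1 = 1"
  using envelope by (simp add: LR_envelope_def)

lemma iota_add: "p \<in> S \<Longrightarrow> q \<in> S \<Longrightarrow> \<iota> (p + q) = \<iota> p + \<iota> q"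
  using envelope by (simp add: LR_envelope_def)

lemma iota_mult: "p \<in> S \<Longrightarrow> q \<in> S \<Longrightarrow> \<iota> (p * q) = \<iota> p * \<iota> q"
  using envelope by (simp add: LR_envelope_def)

lemma iota_zero [simp]: "\<iota> 0 = 0"
  using iota_add[of 0 0] by simp

lemma iota_commute: "p \<in> S \<Longrightarrow> q \<in> S \<Longrightarrow> \<iota> p * \<iota> q = \<iota> q * \<iota> p"
  using iota_mult[of p q] iota_mult[of q p] by (simp add: mult.commute)

lemma delta_kderiv: "m \<in> {1..n} \<Longrightarrow> is_kderiv n (\<delta> m)"
  using envelope by (simp add: LR_envelope_def)

lemma delta_polys_in: "m \<in> {1..n} \<Longrightarrow> s \<in> S \<Longrightarrow> \<delta> m s \<in> S"
  using delta_kderiv unfolding is_kderiv_def by blast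

lemma delta_zero:
  assumes "m \<in> {1..n}"
  shows "\<delta> m 0 = 0"
proof -
  have "\<delta> m (0 + 0) = \<delta> m 0 + \<delta> m 0"
    using delta_kderiv[OF assms] polys_in_zero[of n] unfolding is_kderiv_def by blast
  then show ?thesis
    by (metis add.right_neutral add_left_cancel)
qed

lemma structure_const_polys_in: "c i j l \<in> S"
  using envelope by (simp add: LR_envelope_def)

lemma alpha_iota_commutator:
  assumes "m \<in> {1..n}" "s \<in> S"
  shows "\<alpha> m * \<iota> s = \<iota> s * \<alpha> m + \<iota> (\<delta> m s)"
proof -
  have "\<alpha> m * \<iota> s - \<iota> s * \<alpha> m = \<iota> (\<delta> m s)"
    using envelope assms unfolding LR_envelope_def by blast
  then show ?thesis
    by (simp add: algebra_simps)
qed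

lemma alpha_alpha_commutator:
  assumes "i \<in> {1..n}" "j \<in> {1..n}"
  shows "\<alpha> i * \<alpha> j = \<alpha> j * \<alpha> i + (\<Sum>l = 1..n. \<iota> (c i j l) * \<alpha> l)"
proof -
  have "\<alpha> i * \<alpha> j - \<alpha> j * \<alpha> i = (\<Sum>l = 1..n. \<iota> (c i j l) * \<alpha> l)"
    using envelope assms unfolding LR_envelope_def by blast
  then show ?thesis
    by (simp add: algebra_simps)
qed

lemma basis_rep_unique: "\<exists>!f. basis_rep n \<iota> \<alpha> u f"
  using envelope by (simp add: LR_envelope_def)

lemma basis_rep_coeff: "basis_rep n \<iota> \<alpha> u (coeff u)"
proof -
  have "coeff u = (THE f. basis_rep n \<iota> \<alpha> u f)"
    by (simp add: ucoeff_def fun_eq_iff)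
  then show ?thesis
    using theI'[OF basis_rep_unique[of u]] by simp
qed

lemma coeff_polys_in: "coeff u I \<in> S"
  using basis_rep_coeff[of u] by (simp add: basis_rep_def)

lemma coeff_outside_idx: "I \<notin> idx n \<Longrightarrow> coeff u I = 0"
  using basis_rep_coeff[of u] by (simp add: basis_rep_def)

lemma finite_coeff_support: "finite {I. coeff u I \<noteq> 0}"
  using basis_rep_coeff[of u] by (simp add: basis_rep_def)

lemma coeff_expansion:
  assumes "finite A" "{I. coeff u I \<noteq> 0} \<subseteq> A"
  shows "u = (\<Sum>I\<in>A. \<iota> (coeff u I) * apow I)"
proof -
  have "u = (\<Sum>I | coeff u I \<noteq> 0. \<iota> (coeff u I) * apow I)"
    using basis_rep_coeff[of u] by (simp add: basis_rep_def)
  also have "\<dots> = (\<Sum>I\<in>A. \<iota> (coeff u I) * apow I)"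
    by (rule sum.mono_neutral_left) (use assms in auto)
  finally show ?thesis .
qed

lemma coeff_eqI:
  assumes "\<And>I. f I \<in> S" "\<And>I. I \<notin> idx n \<Longrightarrow> f I = 0"
    and "finite A" "{I. f I \<noteq> 0} \<subseteq> A" "u = (\<Sum>I\<in>A. \<iota> (f I) * apow I)"
  shows "coeff u = f"
proof -
  have "u = (\<Sum>I | f I \<noteq> 0. \<iota> (f I) * apow I)"
    unfolding assms(5) by (rule sum.mono_neutral_right) (use assms in auto)
  then have "basis_rep n \<iota> \<alpha> u f"
    using assms finite_subset unfolding basis_rep_def by blast
  then show ?thesis
    using basis_rep_unique[of u] basis_rep_coeff[of u] by blast
qed

lemma coeff_zero: "coeff 0 = (\<lambda>_. 0)"
  by (rule coeff_eqI[where A = "{}"]) auto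

lemma coeff_eq_0_iff: "coeff u = (\<lambda>_. 0) \<longleftrightarrow> u = 0"
  using coeff_expansion[of "{}" u] coeff_zero by auto

lemma coeff_add: "coeff (u + v) = (\<lambda>I. coeff u I + coeff v I)"
proof (rule coeff_eqI)
  let ?A = "{I. coeff u I \<noteq> 0} \<union> {I. coeff v I \<noteq> 0}"
  show "finite ?A"
    using finite_coeff_support by auto
  show "u + v = (\<Sum>I\<in>?A. \<iota> (coeff u I + coeff v I) * apow I)"
    using coeff_expansion[of ?A u] coeff_expansion[of ?A v] finite_coeff_support
    by (simp add: iota_add coeff_polys_in distrib_right sum.distrib)
qed (auto simp: coeff_polys_in coeff_outside_idx)

lemma coeff_iota_mult: "h \<in> S \<Longrightarrow> coeff (\<iota> h * u) = (\<lambda>I. h * coeff u I)"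
proof (rule coeff_eqI)
  assume h: "h \<in> S"
  let ?A = "{I. coeff u I \<noteq> 0}"
  have "\<iota> h * u = \<iota> h * (\<Sum>I\<in>?A. \<iota> (coeff u I) * apow I)"
    using coeff_expansion[of ?A u] finite_coeff_support by simp
  also have "\<dots> = (\<Sum>I\<in>?A. \<iota> (h * coeff u I) * apow I)"
    using h by (simp add: sum_distrib_left iota_mult coeff_polys_in mult.assoc)
  finally show "\<iota> h * u = (\<Sum>I\<in>?A. \<iota> (h * coeff u I) * apow I)" .
qed (auto simp: coeff_polys_in coeff_outside_idx finite_coeff_support)

lemma coeff_sum: "coeff (\<Sum>i\<in>A. u i) = (\<lambda>I. \<Sum>i\<in>A. coeff (u i) I)"
  by (induction A rule: infinite_finite_induct) (auto simp: coeff_zero coeff_add)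

lemma coeff_monomial:
  "g \<in> S \<Longrightarrow> K \<in> idx n \<Longrightarrow> coeff (\<iota> g * apow K) = (\<lambda>I. if I = K then g else 0)"
  by (rule coeff_eqI[where A = "{K}"]) auto

definition order_below :: "nat \<Rightarrow> 'u set" where
  "order_below q = {u. \<forall>I. q \<le> ord_idx n I \<longrightarrow> coeff u I = 0}"

lemma order_below_zero [simp]: "0 \<in> order_below q"
  by (simp add: order_below_def coeff_zero)

lemma order_below_add: "u \<in> order_below q \<Longrightarrow> v \<in> order_below q \<Longrightarrow> u + v \<in> order_below q"
  by (simp add: order_below_def coeff_add)

lemma order_below_iota_mult: "h \<in> S \<Longrightarrow> u \<in> order_below q \<Longrightarrow> \<iota> h * u \<in> order_below q"
  by (simp add: order_below_def coeff_iota_mult)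

lemma order_below_sum: "(\<And>i. i \<in> A \<Longrightarrow> u i \<in> order_below q) \<Longrightarrow> (\<Sum>i\<in>A. u i) \<in> order_below q"
  by (induction A rule: infinite_finite_induct) (auto intro: order_below_add)

lemma order_below_mono: "q \<le> q' \<Longrightarrow> u \<in> order_below q \<Longrightarrow> u \<in> order_below q'"
  by (simp add: order_below_def)

lemma order_below_0: "u \<in> order_below 0 \<Longrightarrow> u = 0"
  using coeff_eq_0_iff by (auto simp: order_below_def)

lemma iota_mult_apow_order_below:
  "g \<in> S \<Longrightarrow> K \<in> idx n \<Longrightarrow> ord_idx n K < q \<Longrightarrow> \<iota> g * apow K \<in> order_below q"
  by (auto simp: order_below_def coeff_monomial)

lemma apow_order_below: "K \<in> idx n \<Longrightarrow> ord_idx n K < q \<Longrightarrow> apow K \<in> order_below q"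
  using iota_mult_apow_order_below[of 1 K q] iota_one by simp

lemma alpha_mult_order_below_of_monomials:
  assumes monomials: "\<And>K m. K \<in> idx n \<Longrightarrow> ord_idx n K < q \<Longrightarrow> m \<in> {1..n} \<Longrightarrow>
      \<alpha> m * apow K \<in> order_below (ord_idx n K + 2)"
    and j: "j \<in> {1..n}" and u: "u \<in> order_below q"
  shows "\<alpha> j * u \<in> order_below (q + 1)"
proof -
  let ?A = "{I. coeff u I \<noteq> 0}"
  have "\<alpha> j * u = \<alpha> j * (\<Sum>I\<in>?A. \<iota> (coeff u I) * apow I)"
    using coeff_expansion[of ?A u] finite_coeff_support by simp
  also have "\<dots> = (\<Sum>I\<in>?A. \<iota> (coeff u I) * (\<alpha> j * apow I) + \<iota> (\<delta> j (coeff u I)) * apow I)"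
    unfolding sum_distrib_left
    by (rule sum.cong) (simp_all add: mult.assoc[symmetric] alpha_iota_commutator[OF j coeff_polys_in]
        distrib_right)
  also have "\<dots> \<in> order_below (q + 1)"
  proof (rule order_below_sum)
    fix I assume "I \<in> ?A"
    then have I: "I \<in> idx n" "ord_idx n I < q"
      using coeff_outside_idx u unfolding order_below_def by (auto simp: not_le[symmetric])
    have "\<iota> (coeff u I) * (\<alpha> j * apow I) \<in> order_below (q + 1)"
      using order_below_iota_mult[OF coeff_polys_in monomials[OF I j]] I(2)
        order_below_mono[of "ord_idx n I + 2" "q + 1"] by auto
    moreover have "\<iota> (\<delta> j (coeff u I)) * apow I \<in> order_below (q + 1)"
      using iota_mult_apow_order_below[OF delta_polys_in[OF j coeff_polys_in] I(1)] I(2) by simp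
    ultimately show "\<iota> (coeff u I) * (\<alpha> j * apow I) + \<iota> (\<delta> j (coeff u I)) * apow I
        \<in> order_below (q + 1)"
      by (rule order_below_add)
  qed
  finally show ?thesis .
qed

lemma alpha_mult_apow_order_below_of_congruence:
  assumes "K \<in> idx n" "m \<in> {1..n}"
    and "\<alpha> m * apow K - apow (K(m := K m + 1)) \<in> order_below (ord_idx n K + 1)"
  shows "\<alpha> m * apow K \<in> order_below (ord_idx n K + 2)"
proof -
  have "apow (K(m := K m + 1)) \<in> order_below (ord_idx n K + 2)"
    by (rule apow_order_below) (use assms(1,2) ord_idx_incr[OF assms(2), of K] in \<open>auto simp: idx_upd\<close>)
  moreover have "\<alpha> m * apow K - apow (K(m := K m + 1)) \<in> order_below (ord_idx n K + 2)"
    using order_below_mono[OF _ assms(3)] by simp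
  ultimately show ?thesis
    using order_below_add by fastforce
qed

text \<open>Induction on \<open>|K|\<close>: if \<open>\<alpha>^K = \<alpha>\<^sub>j \<alpha>^K\<^sub>0\<close> with \<open>m < j\<close>,
  move \<open>\<alpha>\<^sub>m\<close> past \<open>\<alpha>\<^sub>j\<close>; the bracket \<open>[\<alpha>\<^sub>m, \<alpha>\<^sub>j]\<close> lies in \<open>L\<close>
  and so only contributes terms of order at most \<open>|K|\<close>.\<close>

lemma alpha_mult_apow_congruence:
  assumes "K \<in> idx n" "m \<in> {1..n}"
  shows "\<alpha> m * apow K - apow (K(m := K m + 1)) \<in> order_below (ord_idx n K + 1)"
  using assms
proof (induction "ord_idx n K" arbitrary: K m rule: less_induct)
  case less
  note K = less.prems(1) and m = less.prems(2)
  let ?d = "ord_idx n K"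
  have lower: "\<alpha> l * apow K' \<in> order_below (ord_idx n K' + 2)"
    if "K' \<in> idx n" "ord_idx n K' < ?d" "l \<in> {1..n}" for K' l
    using alpha_mult_apow_order_below_of_congruence less.hyps that by blast
  show ?case
  proof (cases "\<forall>l>m. K l = 0")
    case True
    then show ?thesis
      using alpha_pow_incr_leading[of m n K \<alpha>] m by simp
  next
    case False
    then obtain l where "m < l" "0 < K l"
      by auto
    then obtain j where j: "j \<in> {1..n}" "m < j" "0 < K j" "\<And>i. j < i \<Longrightarrow> K i = 0"
      using idx_leading_index[OF K] by (metis order_less_le_trans)
    define K0 where "K0 = K(j := K j - 1)"
    define K1 where "K1 = K0(m := K0 m + 1)"
    have K0: "K0 \<in> idx n" "ord_idx n K0 + 1 = ?d" "\<And>i. j < i \<Longrightarrow> K0 i = 0"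
      using K j ord_idx_decr[of j n K] by (simp_all add: K0_def idx_upd)
    have "K0(j := K0 j + 1) = K"
      using j(3) by (auto simp: K0_def)
    then have apow_K: "apow K = \<alpha> j * apow K0"
      using alpha_pow_incr_leading[of j n K0 \<alpha>] j(1) K0(3) by simp
    have "K1(j := K1 j + 1) = K(m := K m + 1)"
      using j(2,3) by (auto simp: K1_def K0_def)
    then have apow_K1: "\<alpha> j * apow K1 = apow (K(m := K m + 1))"
      using alpha_pow_incr_leading[of j n K1 \<alpha>] j(1,2) K0(3) by (simp add: K1_def)
    define E where "E = \<alpha> m * apow K0 - apow K1"
    have "E \<in> order_below ?d"
      using less.hyps[of K0 m] K0 m by (simp add: E_def K1_def)
    then have jE: "\<alpha> j * E \<in> order_below (?d + 1)"
      using alpha_mult_order_below_of_monomials[OF lower j(1)] by blast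
    have "\<alpha> m * apow K - apow (K(m := K m + 1))
        = \<alpha> j * E + (\<Sum>l = 1..n. \<iota> (c m j l) * (\<alpha> l * apow K0))"
      unfolding apow_K apow_K1[symmetric] E_def mult.assoc[symmetric]
        alpha_alpha_commutator[OF m j(1)]
      by (simp add: algebra_simps sum_distrib_right)
    also have "\<dots> \<in> order_below (?d + 1)"
    proof (rule order_below_add[OF jE order_below_sum])
      fix l assume "l \<in> {1..n}"
      then have "\<alpha> l * apow K0 \<in> order_below (?d + 1)"
        using lower[of K0 l] K0 by simp
      then show "\<iota> (c m j l) * (\<alpha> l * apow K0) \<in> order_below (?d + 1)"
        by (rule order_below_iota_mult[OF structure_const_polys_in])
    qed
    finally show ?thesis .
  qed
qed

lemma alpha_mult_apow_order_below:
  "K \<in> idx n \<Longrightarrow> m \<in> {1..n} \<Longrightarrow> \<alpha> m * apow K \<in> order_below (ord_idx n K + 2)"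
  using alpha_mult_apow_order_below_of_congruence alpha_mult_apow_congruence by blast

lemma alpha_mult_order_below: "j \<in> {1..n} \<Longrightarrow> u \<in> order_below q \<Longrightarrow> \<alpha> j * u \<in> order_below (q + 1)"
  using alpha_mult_order_below_of_monomials alpha_mult_apow_order_below by blast

definition leading_commutator :: "(nat \<Rightarrow> nat) \<Rightarrow> 'k mpoly \<Rightarrow> 'u" where
  "leading_commutator I s = (\<Sum>m = 1..n. \<iota> (of_nat (I m) * \<delta> m s) * apow (I(m := I m - 1)))"

lemma commutator_alpha_mult:
  assumes "j \<in> {1..n}" "s \<in> S"
  shows "\<alpha> j * x * \<iota> s - \<iota> s * (\<alpha> j * x) = \<alpha> j * (x * \<iota> s - \<iota> s * x) + \<iota> (\<delta> j s) * x"
proof -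
  have "\<iota> s * (\<alpha> j * x) = (\<alpha> j * \<iota> s - \<iota> (\<delta> j s)) * x"
    using alpha_iota_commutator[OF assms] by (simp add: mult.assoc[symmetric])
  then show ?thesis
    by (simp add: algebra_simps)
qed

lemma leading_commutator_incr:
  fixes I :: "nat \<Rightarrow> nat"
  assumes j: "j \<in> {1..n}" and s: "s \<in> S"
  defines "I' \<equiv> I(j := I j + 1)"
  shows "leading_commutator I' s
    = (\<Sum>m = 1..n. \<iota> (of_nat (I m) * \<delta> m s) * apow (I'(m := I' m - 1))) + \<iota> (\<delta> j s) * apow I"
proof -
  have "\<iota> (of_nat (I' m) * \<delta> m s) * apow (I'(m := I' m - 1))
      = \<iota> (of_nat (I m) * \<delta> m s) * apow (I'(m := I' m - 1)) + (if m = j then \<iota> (\<delta> j s) * apow I else 0)"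
    if m: "m \<in> {1..n}" for m
  proof (cases "m = j")
    case True
    have "of_nat (I' m) * \<delta> m s = of_nat (I m) * \<delta> m s + \<delta> j s"
      using True by (simp add: I'_def distrib_right)
    then have "\<iota> (of_nat (I' m) * \<delta> m s) = \<iota> (of_nat (I m) * \<delta> m s) + \<iota> (\<delta> j s)"
      using True by (simp add: iota_add polys_in_mult polys_in_of_nat delta_polys_in[OF j s])
    then show ?thesis
      using True by (simp add: I'_def distrib_right)
  qed (simp add: I'_def)
  then show ?thesis
    unfolding leading_commutator_def using j by (simp add: sum.distrib)
qed

text \<open>Moving \<open>\<alpha>\<^sub>j\<close> past the coefficients of \<open>leading_commutator I s\<close> costs terms of order
  \<open>|I| - 1\<close>; past the monomials it costs nothing, since \<open>\<alpha>\<^sub>j\<close> is the leftmost factor.\<close>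

lemma alpha_mult_leading_commutator:
  assumes j: "j \<in> {1..n}" and I: "I \<in> idx n" "\<And>i. j < i \<Longrightarrow> I i = 0" and s: "s \<in> S"
  defines "I' \<equiv> I(j := I j + 1)"
  shows "\<alpha> j * leading_commutator I s
    - (\<Sum>m = 1..n. \<iota> (of_nat (I m) * \<delta> m s) * apow (I'(m := I' m - 1))) \<in> order_below (ord_idx n I)"
proof -
  define g where "g m = of_nat (I m) * \<delta> m s" for m
  define K where "K m = I(m := I m - 1)" for m
  have g: "g m \<in> S" if "m \<in> {1..n}" for m
    using delta_polys_in[OF that s] by (auto simp: g_def)
  have "\<alpha> j * (\<iota> (g m) * apow (K m)) = \<iota> (g m) * apow (I'(m := I' m - 1)) + \<iota> (\<delta> j (g m)) * apow (K m)"
    if m: "m \<in> {1..n}" for m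
  proof (cases "I m = 0")
    case True
    then show ?thesis
      by (simp add: g_def delta_zero[OF j])
  next
    case False
    have "(K m)(j := K m j + 1) = I'(m := I' m - 1)"
      using False by (auto simp: K_def I'_def)
    then have "\<alpha> j * apow (K m) = apow (I'(m := I' m - 1))"
      using alpha_pow_incr_leading[of j n "K m" \<alpha>] j I(2) by (simp add: K_def)
    then show ?thesis
      using alpha_iota_commutator[OF j g[OF m]] by (simp add: distrib_right mult.assoc flip: mult.assoc[of "\<alpha> j"])
  qed
  then have "\<alpha> j * leading_commutator I s - (\<Sum>m = 1..n. \<iota> (g m) * apow (I'(m := I' m - 1)))
      = (\<Sum>m = 1..n. \<iota> (\<delta> j (g m)) * apow (K m))"
    unfolding leading_commutator_def g_def[symmetric] K_def[symmetric] sum_distrib_left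
    by (simp add: sum.distrib)
  also have "\<dots> \<in> order_below (ord_idx n I)"
  proof (rule order_below_sum)
    fix m assume m: "m \<in> {1..n}"
    show "\<iota> (\<delta> j (g m)) * apow (K m) \<in> order_below (ord_idx n I)"
    proof (cases "I m = 0")
      case True
      then show ?thesis
        by (simp add: g_def delta_zero[OF j])
    next
      case False
      then show ?thesis
        using iota_mult_apow_order_below[OF delta_polys_in[OF j g[OF m]]] ord_idx_decr[OF m, of I] I(1) m
        by (simp add: K_def idx_upd)
    qed
  qed
  finally show ?thesis
    by (simp add: g_def)
qed

lemma commutator_apow:
  assumes "I \<in> idx n" "s \<in> S"
  shows "apow I * \<iota> s - \<iota> s * apow I - leading_commutator I s \<in> order_below (ord_idx n I - 1)"
  using assms(1)
proof (induction "ord_idx n I" arbitrary: I)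
  case 0
  then have "I l = 0" for l
    using ord_idx_eq_0D by metis
  then show ?case
    by (simp add: alpha_pow_eq_1 leading_commutator_def)
next
  case (Suc d)
  have "\<exists>l. 0 < I l"
  proof (rule ccontr)
    assume "\<not> (\<exists>l. 0 < I l)"
    then have "ord_idx n I = 0"
      by (simp add: ord_idx_def)
    then show False
      using Suc.hyps(2) by simp
  qed
  then obtain l where "0 < I l"
    by blast
  then obtain j where j: "j \<in> {1..n}" "0 < I j" "\<And>i. j < i \<Longrightarrow> I i = 0"
    using idx_leading_index[OF Suc.prems] by blast
  define I0 where "I0 = I(j := I j - 1)"
  have I0: "I0 \<in> idx n" "ord_idx n I0 = d" "\<And>i. j < i \<Longrightarrow> I0 i = 0"
    using Suc.prems Suc.hyps(2) j ord_idx_decr[of j n I] by (simp_all add: I0_def idx_upd)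
  have I: "I = I0(j := I0 j + 1)"
    using j(2) by (auto simp: I0_def)
  have apow_I: "apow I = \<alpha> j * apow I0"
    using alpha_pow_incr_leading[of j n I0 \<alpha>] j(1) I0(3) I by simp
  define E0 where "E0 = apow I0 * \<iota> s - \<iota> s * apow I0 - leading_commutator I0 s"
  define R where "R = (\<Sum>m = 1..n. \<iota> (of_nat (I0 m) * \<delta> m s) * apow (I(m := I m - 1)))"
  have LC_I: "leading_commutator I s = R + \<iota> (\<delta> j s) * apow I0"
    using leading_commutator_incr[OF j(1) assms(2), of I0] unfolding R_def I[symmetric] .
  have "apow I * \<iota> s - \<iota> s * apow I = \<alpha> j * (apow I0 * \<iota> s - \<iota> s * apow I0) + \<iota> (\<delta> j s) * apow I0"
    using commutator_alpha_mult[OF j(1) assms(2), of "apow I0"] by (simp add: apow_I mult.assoc)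
  then have "apow I * \<iota> s - \<iota> s * apow I - leading_commutator I s
      = \<alpha> j * E0 + (\<alpha> j * leading_commutator I0 s - R)"
    by (simp add: LC_I E0_def algebra_simps)
  also have "\<dots> \<in> order_below d"
  proof (rule order_below_add)
    have "E0 \<in> order_below (d - 1)"
      using Suc.hyps(1)[of I0] I0 by (simp add: E0_def)
    then show "\<alpha> j * E0 \<in> order_below d"
      using alpha_mult_order_below[OF j(1)] order_below_0 by (cases d) fastforce+
    show "\<alpha> j * leading_commutator I0 s - R \<in> order_below d"
      using alpha_mult_leading_commutator[OF j(1) I0(1) I0(3) assms(2)]
      unfolding I[symmetric] R_def[symmetric] I0(2) .
  qed
  finally show ?case
    by (simp flip: Suc.hyps(2))
qed

lemma coeff_leading_commutator:
  assumes "I \<in> idx n" "s \<in> S"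
  shows "coeff (leading_commutator I s) J
    = (\<Sum>m = 1..n. if I = J(m := J m + 1) then of_nat (I m) * \<delta> m s else 0)"
proof -
  have "coeff (leading_commutator I s) J
      = (\<Sum>m = 1..n. if J = I(m := I m - 1) then of_nat (I m) * \<delta> m s else 0)"
    unfolding leading_commutator_def coeff_sum using assms
    by (simp add: coeff_monomial idx_upd polys_in_mult polys_in_of_nat delta_polys_in)
  also have "\<dots> = (\<Sum>m = 1..n. if I = J(m := J m + 1) then of_nat (I m) * \<delta> m s else 0)"
  proof (rule sum.cong)
    fix m
    show "(if J = I(m := I m - 1) then of_nat (I m) * \<delta> m s else 0)
        = (if I = J(m := J m + 1) then of_nat (I m) * \<delta> m s else 0)"
    proof (cases "I m = 0")
      case False
      then have "J = I(m := I m - 1) \<longleftrightarrow> I = J(m := J m + 1)"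
        by (auto simp: fun_eq_iff)
      then show ?thesis
        by simp
    qed (auto dest: fun_cong[of _ _ m])
  qed simp
  finally show ?thesis .
qed

lemma commutator_iota_combination:
  assumes "\<And>I. I \<in> A \<Longrightarrow> f I \<in> S" "s \<in> S"
  shows "(\<Sum>I\<in>A. \<iota> (f I) * u I) * \<iota> s - \<iota> s * (\<Sum>I\<in>A. \<iota> (f I) * u I)
    = (\<Sum>I\<in>A. \<iota> (f I) * (u I * \<iota> s - \<iota> s * u I))"
proof -
  have "\<iota> s * (\<iota> (f I) * u I) = \<iota> (f I) * (\<iota> s * u I)" if "I \<in> A" for I
    using iota_commute[OF assms(2) assms(1)[OF that]] by (simp flip: mult.assoc)
  then show ?thesis
    by (simp add: sum_distrib_left sum_distrib_right sum_subtractf right_diff_distrib mult.assoc)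
qed

lemma coeff_commutator_homogeneous:
  assumes A: "A \<subseteq> {I \<in> idx n. ord_idx n I = p}" and f: "\<And>I. I \<in> A \<Longrightarrow> f I \<in> S"
    and s: "s \<in> S" and J: "ord_idx n J = p - 1"
    and a: "a = (\<Sum>I\<in>A. \<iota> (f I) * apow I)"
  shows "coeff (a * \<iota> s - \<iota> s * a) J = (\<Sum>I\<in>A. f I * coeff (leading_commutator I s) J)"
proof -
  define E where "E I = apow I * \<iota> s - \<iota> s * apow I - leading_commutator I s" for I
  have "a * \<iota> s - \<iota> s * a = (\<Sum>I\<in>A. \<iota> (f I) * (apow I * \<iota> s - \<iota> s * apow I))"
    unfolding a by (rule commutator_iota_combination[OF f s])
  also have "\<dots> = (\<Sum>I\<in>A. \<iota> (f I) * leading_commutator I s) + (\<Sum>I\<in>A. \<iota> (f I) * E I)"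
    unfolding sum.distrib[symmetric] by (rule sum.cong) (simp_all add: E_def algebra_simps)
  finally have split: "a * \<iota> s - \<iota> s * a
      = (\<Sum>I\<in>A. \<iota> (f I) * leading_commutator I s) + (\<Sum>I\<in>A. \<iota> (f I) * E I)" .
  have "(\<Sum>I\<in>A. \<iota> (f I) * E I) \<in> order_below (p - 1)"
    using A commutator_apow[OF _ s] by (auto intro!: order_below_sum order_below_iota_mult f simp: E_def)
  then show ?thesis
    unfolding split using J f by (simp add: order_below_def coeff_add coeff_sum coeff_iota_mult)
qed

lemma sum_coeff_leading_commutator:
  assumes p: "1 \<le> p" and J: "J \<in> idx n" "ord_idx n J = p - 1" and s: "s \<in> S"
  shows "(\<Sum>I\<in>{I \<in> idx n. ord_idx n I = p}. f I * coeff (leading_commutator I s) J)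
    = (\<Sum>m = 1..n. of_nat (J m + 1) * \<delta> m s * f (J(m := J m + 1)))"
proof -
  let ?A = "{I \<in> idx n. ord_idx n I = p}"
  have "(\<Sum>I\<in>?A. f I * coeff (leading_commutator I s) J)
      = (\<Sum>m = 1..n. \<Sum>I\<in>?A. if I = J(m := J m + 1) then f I * (of_nat (I m) * \<delta> m s) else 0)"
    by (simp add: coeff_leading_commutator[OF _ s] sum_distrib_left if_distrib sum.swap[of _ ?A]
        cong: if_cong)
  also have "\<dots> = (\<Sum>m = 1..n. of_nat (J m + 1) * \<delta> m s * f (J(m := J m + 1)))"
  proof (rule sum.cong)
    fix m assume m: "m \<in> {1..n}"
    then have "J(m := J m + 1) \<in> ?A"
      using J p ord_idx_incr[OF m, of J] by (simp add: idx_upd)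
    then show "(\<Sum>I\<in>?A. if I = J(m := J m + 1) then f I * (of_nat (I m) * \<delta> m s) else 0)
        = of_nat (J m + 1) * \<delta> m s * f (J(m := J m + 1))"
      by (simp add: sum.delta[OF finite_idx_ord] mult.commute)
  qed simp
  finally show ?thesis .
qed

end

theorem lemma2p3:
  fixes \<iota> :: "'k::field_char_0 mpoly \<Rightarrow> 'u::ring_1"
    and \<alpha> :: "nat \<Rightarrow> 'u"
    and \<delta> :: "nat \<Rightarrow> 'k mpoly \<Rightarrow> 'k mpoly"
    and c :: "nat \<Rightarrow> nat \<Rightarrow> nat \<Rightarrow> 'k mpoly"
    and f :: "(nat \<Rightarrow> nat) \<Rightarrow> 'k mpoly"
    and n p k' :: nat and J :: "nat \<Rightarrow> nat" and a :: 'u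
  assumes "n \<ge> 1"
    and "LR_envelope n \<iota> \<alpha> \<delta> c"
    and "p \<ge> 1"
    and "\<forall>I \<in> idx n. ord_idx n I = p \<longrightarrow> f I \<in> polys_in n"
    and "a = (\<Sum>I \<in> {I \<in> idx n. ord_idx n I = p}. \<iota> (f I) * alpha_pow n \<alpha> I)"
    and "k' \<in> {1..n}"
    and "J \<in> idx n" and "ord_idx n J = p - 1"
  shows "ucoeff n \<iota> \<alpha> (a * \<iota> (Var k') - \<iota> (Var k') * a) J
           = (\<Sum>m = 1..n. of_nat (J m + 1) * \<delta> m (Var k') * f (J(m := J m + 1)))"
proof -
  interpret LR_env n \<iota> \<alpha> \<delta> c
    by (rule LR_env.intro) (rule assms(2))
  have x: "(Var k' :: 'k mpoly) \<in> polys_in n"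
    using assms(6) by (rule polys_in_Var)
  have "ucoeff n \<iota> \<alpha> (a * \<iota> (Var k') - \<iota> (Var k') * a) J
      = (\<Sum>I\<in>{I \<in> idx n. ord_idx n I = p}. f I * coeff (leading_commutator I (Var k')) J)"
    using assms(4,5,8) x by (intro coeff_commutator_homogeneous) auto
  also have "\<dots> = (\<Sum>m = 1..n. of_nat (J m + 1) * \<delta> m (Var k') * f (J(m := J m + 1)))"
    using assms(3,7,8) x by (rule sum_coeff_leading_commutator)
  finally show ?thesis .
qed

end
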